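(* For every real $\alpha$ with $0\le\alpha<8$, all Fourier coefficients of $E_2^{(4)}(\tau)-\alpha\Delta_2^{(4)}(\tau)$ (i.e. the coefficients of $q^n$ for all $n\ge0$) are positive.
   Context: $q=e^{2\pi i\tau}$, $\tau\in\mathfrak H$. $E_2(\tau)=1-24\sum_{n\ge1}\sigma(n)q^n$ with $\sigma(n)=\sum_{d\mid n}d$; $E_2^{(4)}(\tau)=\frac13(4E_2(4\tau)-E_2(\tau))$; $\Delta_2^{(4)}(\tau)=\eta(4\tau)^8/\eta(2\tau)^4=\sum_{n\ge1,\ n\text{ odd}}\sigma(n)q^n$, where $\eta(\tau)=q^{1/24}\prod_{n\ge1}(1-q^n)$. *)

theory Defs
  imports Complex_Main "HOL-Computational_Algebra.Formal_Power_Series"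
begin

(* q-expansions are modelled as formal power series in q with real coefficients *)

definition sigma1 :: "nat \<Rightarrow> nat" where
  "sigma1 n = (\<Sum>d\<in>{d. d dvd n}. d)"

definition E2 :: "real fps" where
  "E2 = Abs_fps (\<lambda>n. if n = 0 then 1 else - 24 * real (sigma1 n))"

definition E2_at4 :: "real fps" where
  "E2_at4 = fps_compose E2 (fps_X ^ 4)"

definition E2_4 :: "real fps" where
  "E2_4 = fps_const (1/3) * (fps_const 4 * E2_at4 - E2)"

(* Delta_2^{(4)}(tau) = eta(4tau)^8/eta(2tau)^4 = sum_{n odd} sigma(n) q^n *)
definition Delta2_4 :: "real fps" where
  "Delta2_4 = Abs_fps (\<lambda>n. if odd n then real (sigma1 n) else 0)"

end

theory Submission
  imports Defs
begin

(* The coefficients of E_2^(4) are 1 at n = 0 and 8 sigma(n) - 32 sigma(n/4) [4 | n] for n > 0.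
   They are positive because the divisors of 4m include 1 and all 4d with d | m, so
   sigma(4m) >= 4 sigma(m) + 1. Delta_2^(4) is supported on odd exponents, where 4 does not
   divide n and the coefficient of E_2^(4) - alpha Delta_2^(4) is (8 - alpha) sigma(n). *)

lemma fps_compose_X_power_nth:
  fixes f :: "'a::comm_ring_1 fps"
  assumes "k > 0"
  shows "fps_nth (fps_compose f (fps_X ^ k)) n = (if k dvd n then fps_nth f (n div k) else 0)"
proof -
  have "fps_nth (fps_compose f (fps_X ^ k)) n = (\<Sum>i\<in>{0..n}. fps_nth f i * (if n = k * i then 1 else 0))"
    unfolding fps_compose_nth by (simp add: power_mult [symmetric])
  also have "\<dots> = (\<Sum>i\<in>{0..n}. if i = n div k \<and> k dvd n then fps_nth f i else 0)"
    by (rule sum.cong) (use assms in auto)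
  also have "\<dots> = (if k dvd n then fps_nth f (n div k) else 0)"
    by (simp add: sum.delta')
  finally show ?thesis .
qed

lemma sigma1_pos: "n > 0 \<Longrightarrow> sigma1 n \<ge> 1"
  unfolding sigma1_def
  using member_le_sum [of 1 "{d. d dvd n}" "\<lambda>d. d"] by auto

lemma sigma1_mult_ge:
  assumes "k > 1" and "m > 0"
  shows "sigma1 (k * m) \<ge> k * sigma1 m + 1"
proof -
  have one_notin: "1 \<notin> (*) k ` {d. d dvd m}"
    using assms(1) by (simp add: image_iff)
  have "k * sigma1 m + 1 = 1 + (\<Sum>d\<in>(*) k ` {d. d dvd m}. d)"
    using assms(1) by (simp add: sum.reindex inj_on_def sigma1_def sum_distrib_left)
  also have "\<dots> = (\<Sum>d\<in>insert 1 ((*) k ` {d. d dvd m}). d)"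
    using one_notin assms(2) by simp
  also have "\<dots> \<le> sigma1 (k * m)"
    unfolding sigma1_def by (rule sum_mono2) (use assms in \<open>auto intro: mult_dvd_mono\<close>)
  finally show ?thesis .
qed

lemma E2_4_nth:
  "fps_nth E2_4 n =
     (if n = 0 then 1
      else 8 * real (sigma1 n) - (if 4 dvd n then 32 * real (sigma1 (n div 4)) else 0))"
  by (auto simp: E2_4_def E2_at4_def E2_def fps_compose_X_power_nth)

lemma E2_4_nth_pos: "fps_nth E2_4 n > 0"
proof (cases "n > 0 \<and> 4 dvd n")
  case True
  then obtain m where n: "n = 4 * m" and "m > 0"
    by auto
  then have "sigma1 n \<ge> 4 * sigma1 m + 1"
    using sigma1_mult_ge [of 4 m] by simp
  then have "real (sigma1 n) \<ge> 4 * real (sigma1 m) + 1"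
    by linarith
  then show ?thesis
    by (simp add: E2_4_nth n)
next
  case False
  then show ?thesis
    using sigma1_pos [of n] by (auto simp: E2_4_nth)
qed

theorem mainTheorem7:
  fixes \<alpha> :: real
  assumes "0 \<le> \<alpha>" and "\<alpha> < 8"
  shows "\<forall>n::nat. fps_nth (E2_4 - fps_const \<alpha> * Delta2_4) n > 0"
proof
  fix n :: nat
  show "fps_nth (E2_4 - fps_const \<alpha> * Delta2_4) n > 0"
  proof (cases "odd n")
    case True
    then have "n > 0" and "\<not> 4 dvd n"
      by (auto intro: Nat.gr0I)
    then have "fps_nth (E2_4 - fps_const \<alpha> * Delta2_4) n = (8 - \<alpha>) * real (sigma1 n)"
      using True by (simp add: E2_4_nth Delta2_4_def algebra_simps)
    then show ?thesis
      using sigma1_pos [OF \<open>n > 0\<close>] assms(2) by simp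
  next
    case False
    then show ?thesis
      using E2_4_nth_pos [of n] by (simp add: Delta2_4_def)
  qed
qed

end
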